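(* Let $G$ be a graph with maximum degree $\Delta\ge 3$. Then $$\pi_l(G) \le \left\lceil \Delta^2 + \frac{3}{2^{2/3}}\Delta^{5/3} + \frac{2^{2/3}\Delta^{5/3}}{\Delta^{1/3}-2^{1/3}}\right\rceil.$$
   Context: In a vertex-colored graph, a $2j$-repetition is a path $v_1v_2\dots v_{2j}$ on $2j$ vertices with $c(v_i)=c(v_{i+j})$ for all $1\le i\le j$. A vertex-coloring is non-repetitive if it contains no $2j$-repetition for any $j\ge1$. $\pi_l(G)$, the non-repetitive choice number, is the minimum $k$ such that for every assignment of lists of size at least $k$ to the vertices, $G$ has a non-repetitive coloring in which every vertex receives a color from its list. *)

theory Defs
  imports Complex_Main
begin

definition simple_graph :: "'a set \<Rightarrow> ('a \<Rightarrow> 'a \<Rightarrow> bool) \<Rightarrow> bool" where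
  "simple_graph V E \<longleftrightarrow> finite V \<and> (\<forall>u v. E u v \<longrightarrow> u \<in> V \<and> v \<in> V)
     \<and> (\<forall>u v. E u v \<longrightarrow> E v u) \<and> (\<forall>v. \<not> E v v)"

definition degree :: "'a set \<Rightarrow> ('a \<Rightarrow> 'a \<Rightarrow> bool) \<Rightarrow> 'a \<Rightarrow> nat" where
  "degree V E v = card {u \<in> V. E v u}"

definition max_degree :: "'a set \<Rightarrow> ('a \<Rightarrow> 'a \<Rightarrow> bool) \<Rightarrow> nat" where
  "max_degree V E = Max (degree V E ` V)"

definition is_path :: "'a set \<Rightarrow> ('a \<Rightarrow> 'a \<Rightarrow> bool) \<Rightarrow> 'a list \<Rightarrow> bool" where
  "is_path V E p \<longleftrightarrow> set p \<subseteq> V \<and> distinct p \<and> (\<forall>i. Suc i < length p \<longrightarrow> E (p ! i) (p ! Suc i))"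

definition has_repetition :: "'a set \<Rightarrow> ('a \<Rightarrow> 'a \<Rightarrow> bool) \<Rightarrow> ('a \<Rightarrow> 'c) \<Rightarrow> bool" where
  "has_repetition V E c \<longleftrightarrow> (\<exists>p j. j \<ge> 1 \<and> is_path V E p \<and> length p = 2 * j
      \<and> (\<forall>i<j. c (p ! i) = c (p ! (i + j))))"

definition nonrepetitive :: "'a set \<Rightarrow> ('a \<Rightarrow> 'a \<Rightarrow> bool) \<Rightarrow> ('a \<Rightarrow> 'c) \<Rightarrow> bool" where
  "nonrepetitive V E c \<longleftrightarrow> \<not> has_repetition V E c"

definition nonrep_choosable :: "'a set \<Rightarrow> ('a \<Rightarrow> 'a \<Rightarrow> bool) \<Rightarrow> nat \<Rightarrow> bool" where
  "nonrep_choosable V E k \<longleftrightarrow>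
     (\<forall>L :: 'a \<Rightarrow> nat set. (\<forall>v\<in>V. infinite (L v) \<or> k \<le> card (L v)) \<longrightarrow>
        (\<exists>c. (\<forall>v\<in>V. c v \<in> L v) \<and> nonrepetitive V E c))"

definition nonrep_choice_number :: "'a set \<Rightarrow> ('a \<Rightarrow> 'a \<Rightarrow> bool) \<Rightarrow> nat" where
  "nonrep_choice_number V E = (LEAST k. nonrep_choosable V E k)"

end

theory Submission
  imports Defs "HOL-Library.FuncSet"
begin

text \<open>A counting argument in the style of Rosenfeld. Fix lists of size \<open>k\<close> and let \<open>C(S)\<close> be the
  set of nonrepetitive list colourings of \<open>S \<subseteq> V\<close>; one shows \<open>|C(S + v)| \<ge> \<beta> |C(S)|\<close> by
  induction on \<open>|S|\<close>. Among the \<open>k |C(S)|\<close> extensions to \<open>v\<close> of colourings in \<open>C(S)\<close>, a bad one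
  has a \<open>2j\<close>-repetition along a path through \<open>v\<close>, with \<open>v\<close> in the first half after possibly
  reversing the path. There are at most \<open>j \<Delta>^(2j-1)\<close> such paths, and a colouring with a
  repetition along a given path is determined by its restriction to \<open>S\<close> minus the first half,
  so by induction each path carries at most \<open>|C(S)| / \<beta>^(j-1)\<close> bad extensions. Summing the
  series, at most \<open>|C(S)| \<Delta> / (1 - \<Delta>^2/\<beta>)^2 \<le> (k - \<beta>) |C(S)|\<close> extensions are bad once
  \<open>k \<ge> \<beta> + \<Delta> / (1 - \<Delta>^2/\<beta>)^2\<close>. Hence \<open>|C(V)| \<ge> \<beta>^|V| > 0\<close>, and the choice
  \<open>\<beta> = \<Delta>^2 + 2^(1/3) \<Delta>^(5/3)\<close> gives the stated bound.\<close>

definition walks :: "'a set \<Rightarrow> ('a \<Rightarrow> 'a \<Rightarrow> bool) \<Rightarrow> nat \<Rightarrow> 'a list set" where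
  "walks V E n = {p. length p = n \<and> set p \<subseteq> V \<and> (\<forall>i. Suc i < length p \<longrightarrow> E (p ! i) (p ! Suc i))}"

lemma finite_walks: "finite V \<Longrightarrow> finite (walks V E n)"
  by (rule finite_subset[OF _ finite_lists_length_eq[of V n]]) (auto simp: walks_def)

lemma rev_in_walks:
  assumes "p \<in> walks V E n" and "\<And>u w. E u w \<Longrightarrow> E w u"
  shows "rev p \<in> walks V E n"
  unfolding walks_def
proof (intro CollectI conjI allI impI)
  fix i assume i: "Suc i < length (rev p)"
  have "E (p ! (length p - Suc (Suc i))) (p ! Suc (length p - Suc (Suc i)))"
    using assms(1) i unfolding walks_def by auto
  moreover have "Suc (length p - Suc (Suc i)) = length p - Suc i" using i by simp
  ultimately show "E (rev p ! i) (rev p ! Suc i)" using i assms(2) by (simp add: rev_nth)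
qed (use assms in \<open>auto simp: walks_def\<close>)

lemma card_walks_snoc_le:
  assumes "finite V" and W: "W \<subseteq> walks V E (Suc n)" and deg: "\<And>w. card {u\<in>V. E w u} \<le> D"
  shows "card {p \<in> walks V E (Suc (Suc n)). butlast p \<in> W} \<le> card W * D"
proof -
  have finW: "finite W" using finite_subset[OF W finite_walks[OF assms(1)]] .
  have sub: "{p \<in> walks V E (Suc (Suc n)). butlast p \<in> W} \<subseteq>
      (\<lambda>(q, u). q @ [u]) ` (SIGMA q:W. {u\<in>V. E (last q) u})"
  proof
    fix p assume p: "p \<in> {p \<in> walks V E (Suc (Suc n)). butlast p \<in> W}"
    then have lp: "length p = Suc (Suc n)" by (simp add: walks_def)
    then obtain q u where pq: "p = q @ [u]" by (cases p rule: rev_exhaust) auto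
    have "E (p ! n) (p ! Suc n)" and "u \<in> V" using p lp unfolding pq walks_def by auto
    moreover have "last q = p ! n" "u = p ! Suc n"
      using lp unfolding pq by (cases q rule: rev_exhaust; simp add: nth_append)+
    ultimately show "p \<in> (\<lambda>(q, u). q @ [u]) ` (SIGMA q:W. {u\<in>V. E (last q) u})"
      using p unfolding pq by (intro image_eqI[of _ _ "(q, u)"]) auto
  qed
  have "finite (SIGMA q:W. {u\<in>V. E (last q) u})" using finW assms(1) by auto
  then have "card {p \<in> walks V E (Suc (Suc n)). butlast p \<in> W}
      \<le> card (SIGMA q:W. {u\<in>V. E (last q) u})"
    using sub by (meson card_image_le card_mono finite_imageI order_trans)
  also have "\<dots> = (\<Sum>q\<in>W. card {u\<in>V. E (last q) u})"
    using finW assms(1) by (simp add: card_SigmaI)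
  also have "\<dots> \<le> card W * D" using sum_bounded_above[of W "\<lambda>q. card {u\<in>V. E (last q) u}" D] deg
    by simp
  finally show ?thesis .
qed

lemma card_walks_through_le:
  assumes "finite V" and deg: "\<And>w. card {u\<in>V. E w u} \<le> D" and sym: "\<And>u w. E u w \<Longrightarrow> E w u"
    and "m \<le> n"
  shows "card {p \<in> walks V E (Suc n). p ! m = v} \<le> D ^ n"
  using \<open>m \<le> n\<close>
proof (induction n arbitrary: m)
  case 0
  have "{p \<in> walks V E (Suc 0). p ! m = v} \<subseteq> {[v]}"
    using 0 by (auto simp: walks_def length_Suc_conv)
  then have "card {p \<in> walks V E (Suc 0). p ! m = v} \<le> card {[v]}" by (intro card_mono) auto
  then show ?case by simp
next
  case (Suc n)
  let ?W = "\<lambda>m. {p \<in> walks V E (Suc (Suc n)). p ! m = v}"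
  have early: "card (?W m) \<le> D ^ Suc n" if "m \<le> n" for m
  proof -
    let ?U = "{q \<in> walks V E (Suc n). q ! m = v}"
    have "?W m \<subseteq> {p \<in> walks V E (Suc (Suc n)). butlast p \<in> ?U}"
    proof
      fix p assume p: "p \<in> ?W m"
      then have "length p = Suc (Suc n)" by (simp add: walks_def)
      then have "butlast p \<in> walks V E (Suc n)" "butlast p ! m = v"
        using p that by (auto simp: walks_def nth_butlast dest: in_set_butlastD)
      then show "p \<in> {p \<in> walks V E (Suc (Suc n)). butlast p \<in> ?U}" using p by simp
    qed
    then have "card (?W m) \<le> card {p \<in> walks V E (Suc (Suc n)). butlast p \<in> ?U}"
      by (intro card_mono) (simp_all add: finite_walks assms(1))
    also have "\<dots> \<le> card ?U * D" by (rule card_walks_snoc_le) (use assms(1) deg in auto)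
    also have "\<dots> \<le> D ^ Suc n" using Suc.IH[OF that] by (simp add: mult.commute)
    finally show ?thesis .
  qed
  show ?case
  proof (cases "m \<le> n")
    case True then show ?thesis by (rule early)
  next
    case False
    then have m: "m = Suc n" using Suc.prems by simp
    \<comment> \<open>reversal turns the last vertex into the first one\<close>
    have "rev ` ?W m \<subseteq> ?W 0"
    proof
      fix q assume "q \<in> rev ` ?W m"
      then obtain p where p: "p \<in> ?W m" and q: "q = rev p" by blast
      then have "length p = Suc (Suc n)" by (simp add: walks_def)
      moreover have "rev p \<in> walks V E (Suc (Suc n))"
        by (rule rev_in_walks) (use p sym in auto)
      ultimately show "q \<in> ?W 0" using p by (simp add: q m rev_nth)
    qed
    then have "card (rev ` ?W m) \<le> card (?W 0)"
      by (intro card_mono) (simp_all add: finite_walks assms(1))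
    then have "card (?W m) \<le> card (?W 0)" by (simp add: card_image)
    also have "\<dots> \<le> D ^ Suc n" by (rule early) simp
    finally show ?thesis .
  qed
qed

lemma weighted_geometric_partial_sum_le:
  fixes r :: real
  assumes "0 \<le> r" "r < 1"
  shows "(\<Sum>i<N. real (Suc i) * r ^ i) \<le> 1 / (1 - r)^2"
proof -
  have sums: "(\<lambda>i. real (Suc i) * r ^ i) sums (1 / (1 - r)^2)"
    using geometric_deriv_sums[of r] assms by simp
  have "(\<Sum>i<N. real (Suc i) * r ^ i) \<le> (\<Sum>i. real (Suc i) * r ^ i)"
    by (rule sum_le_suminf) (use sums_summable[OF sums] assms in auto)
  also have "\<dots> = 1 / (1 - r)^2" using sums by (rule sums_unique[symmetric])
  finally show ?thesis .
qed

lemma cube_root_estimate: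
  fixes a t :: real
  assumes "0 < t" "t < a" "t ^ 3 = 2"
  shows "t * a^5 + a^3 * (a + t)^2 / t^2 \<le> 3 / t^2 * a^5 + t^2 * a^5 / (a - t)"
proof -
  have t4: "t^4 = 2 * t"
  proof -
    have "t^4 = t * t^3" by algebra
    then show ?thesis using assms(3) by simp
  qed
  have "3 * a^5 * (a - t) + t^4 * a^5 - (2 * a^5 + a^3 * (a + t)^2) * (a - t)
      = a^5 * (t^4 - 2 * t) + a^3 * (a * t^2 + t^3)"
    by algebra
  moreover have "0 \<le> a^3 * (a * t^2 + t^3)" using assms by simp
  ultimately have num: "(2 * a^5 + a^3 * (a + t)^2) * (a - t) \<le> 3 * a^5 * (a - t) + t^4 * a^5"
    using t4 by simp
  have nz: "a - t \<noteq> 0" "t^2 \<noteq> 0" using assms by auto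
  have "t * a^5 + a^3 * (a + t)^2 / t^2 = (t^3 * a^5 + a^3 * (a + t)^2) / t^2"
    using assms(1) by (simp add: add_divide_distrib power2_eq_square power3_eq_cube)
  also have "\<dots> = (2 * a^5 + a^3 * (a + t)^2) * (a - t) / (t^2 * (a - t))"
    using assms by simp
  also have "\<dots> \<le> (3 * a^5 * (a - t) + t^4 * a^5) / (t^2 * (a - t))"
    using num assms by (intro divide_right_mono) auto
  also have "\<dots> = (3 * a^5 * (a - t) + t^2 * (t^2 * a^5)) / (t^2 * (a - t))"
    by (simp add: power4_eq_xxxx power2_eq_square mult.assoc)
  also have "\<dots> = 3 * a^5 * (a - t) / (t^2 * (a - t)) + t^2 * (t^2 * a^5) / (t^2 * (a - t))"
    by (rule add_divide_distrib)
  also have "\<dots> = 3 / t^2 * a^5 + t^2 * a^5 / (a - t)"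
    unfolding nonzero_mult_divide_mult_cancel_left[OF nz(2)]
      nonzero_mult_divide_mult_cancel_right[OF nz(1)] times_divide_eq_left ..
  finally show ?thesis .
qed

lemma choice_bound_estimate:
  fixes D :: real
  assumes "D \<ge> 3"
  defines "\<beta> \<equiv> D^2 + 2 powr (1/3) * D powr (5/3)"
  shows "D^2 < \<beta>"
    and "\<beta> + D / (1 - D^2 / \<beta>)^2 \<le>
      D^2 + 3 / 2 powr (2/3) * D powr (5/3) + 2 powr (2/3) * D powr (5/3) / (D powr (1/3) - 2 powr (1/3))"
proof -
  define t where "t = (2::real) powr (1/3)"
  define a where "a = D powr (1/3)"
  have t0: "t > 0" and a0: "a > 0" using assms by (auto simp: t_def a_def)
  have t3: "t^3 = 2" and t2: "2 powr (2/3) = t^2"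
    unfolding t_def by (simp_all add: powr_power)
  have a3: "a^3 = D" and a5: "D powr (5/3) = a^5"
    unfolding a_def using assms by (simp_all add: powr_power)
  have a6: "D^2 = a^5 * a" unfolding a3[symmetric] by algebra
  have "t^3 < a^3" using t3 a3 assms by simp
  then have at: "t < a" by (rule power_less_imp_less_base) (use a0 in simp)
  have \<beta>: "\<beta> = a^5 * (a + t)"
    unfolding \<beta>_def a6 a5 t_def[symmetric] by algebra
  show "D^2 < \<beta>" using t0 a0 unfolding \<beta> a6 by simp
  have "D^2 / \<beta> = a / (a + t)"
    unfolding \<beta> a6 using a0 by simp
  then have "1 - D^2 / \<beta> = t / (a + t)"
    using a0 t0 by (simp add: field_simps)
  then have "D / (1 - D^2 / \<beta>)^2 = a^3 * (a + t)^2 / t^2"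
    by (simp add: a3 power_divide)
  then have "\<beta> + D / (1 - D^2 / \<beta>)^2 = a^5 * a + t * a^5 + a^3 * (a + t)^2 / t^2"
    unfolding \<beta> by (simp add: algebra_simps)
  also have "\<dots> \<le> a^5 * a + 3 / t^2 * a^5 + t^2 * a^5 / (a - t)"
    using cube_root_estimate[OF t0 at t3] by linarith
  finally show "\<beta> + D / (1 - D^2 / \<beta>)^2 \<le>
      D^2 + 3 / 2 powr (2/3) * D powr (5/3) + 2 powr (2/3) * D powr (5/3) / (D powr (1/3) - 2 powr (1/3))"
    unfolding a6 a5 t2 a_def[symmetric] t_def[symmetric] .
qed

lemma is_path_mono: "is_path S E p \<Longrightarrow> S \<subseteq> S' \<Longrightarrow> is_path S' E p"
  by (auto simp: is_path_def)

lemma nonrepetitive_mono: "nonrepetitive S E c \<Longrightarrow> S' \<subseteq> S \<Longrightarrow> nonrepetitive S' E c"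
  unfolding nonrepetitive_def has_repetition_def by (meson is_path_mono)

lemma nonrepetitive_cong:
  assumes "\<And>u. u \<in> S \<Longrightarrow> c u = c' u"
  shows "nonrepetitive S E c \<longleftrightarrow> nonrepetitive S E c'"
proof -
  have "c (p ! i) = c (p ! (i + j)) \<longleftrightarrow> c' (p ! i) = c' (p ! (i + j))"
    if "is_path S E p" "length p = 2 * j" "i < j" for p j i
  proof -
    have "p ! i \<in> S" "p ! (i + j) \<in> S" using that nth_mem[of _ p] by (auto simp: is_path_def)
    then show ?thesis using assms by simp
  qed
  then show ?thesis unfolding nonrepetitive_def has_repetition_def by metis
qed

lemma is_path_rev:
  assumes "is_path S E p" and "\<And>u w. E u w \<Longrightarrow> E w u"
  shows "is_path S E (rev p)"
  using rev_in_walks[of p S E "length p"] assms by (auto simp: is_path_def walks_def)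

lemma repetition_rev:
  assumes "length p = 2 * j" and "\<forall>i<j. c (p ! i) = c (p ! (i + j))"
  shows "\<forall>i<j. c (rev p ! i) = c (rev p ! (i + j))"
proof (intro allI impI)
  fix i assume i: "i < j"
  have "rev p ! i = p ! (j - 1 - i + j)" and "rev p ! (i + j) = p ! (j - 1 - i)"
    using i assms(1) by (simp_all add: rev_nth mult_2)
  then show "c (rev p ! i) = c (rev p ! (i + j))" using assms(2) i by simp
qed

lemma repetition_through_new_vertex:
  assumes "nonrepetitive S E c" and "\<not> nonrepetitive (insert v S) E c"
    and "finite S" and sym: "\<And>u w. E u w \<Longrightarrow> E w u"
  obtains j m p where "1 \<le> j" "2 * j \<le> card (insert v S)" "m < j"
    "is_path (insert v S) E p" "length p = 2 * j" "p ! m = v" "\<forall>i<j. c (p ! i) = c (p ! (i + j))"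
proof -
  obtain p j where pj: "j \<ge> 1" "is_path (insert v S) E p" "length p = 2 * j"
      "\<forall>i<j. c (p ! i) = c (p ! (i + j))"
    using assms(2) unfolding nonrepetitive_def has_repetition_def by blast
  have "v \<in> set p"
  proof (rule ccontr)
    assume "v \<notin> set p"
    then have "is_path S E p" using pj(2) by (auto simp: is_path_def)
    then show False using pj assms(1) unfolding nonrepetitive_def has_repetition_def by blast
  qed
  then obtain m where m: "m < 2 * j" "p ! m = v" using pj(3) by (auto simp: in_set_conv_nth)
  have "2 * j \<le> card (insert v S)"
    using pj(2,3) assms(3) card_mono[of "insert v S" "set p"] distinct_card[of p]
    by (auto simp: is_path_def)
  show thesis
  proof (cases "m < j")
    case True then show thesis using that pj m \<open>2 * j \<le> _\<close> by blast
  next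
    case False
    \<comment> \<open>read backwards, the repetition meets \<open>v\<close> in its first half\<close>
    have "rev p ! (2 * j - 1 - m) = v" using m pj(3) False by (simp add: rev_nth)
    then show thesis
      using that[of j "2 * j - 1 - m" "rev p"] pj is_path_rev[OF pj(2) sym] repetition_rev[OF pj(3,4)]
        \<open>2 * j \<le> _\<close> False m by auto
  qed
qed

lemma repetitive_colourings_eq:
  assumes p: "distinct p" "length p = 2 * j" "set p \<subseteq> T"
    and ext: "c \<in> extensional T" "c' \<in> extensional T"
    and rep: "\<forall>i<j. c (p ! i) = c (p ! (i + j))" "\<forall>i<j. c' (p ! i) = c' (p ! (i + j))"
    and eq: "\<And>u. u \<in> T - set (take j p) \<Longrightarrow> c u = c' u"
  shows "c = c'"
proof
  fix u
  show "c u = c' u"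
  proof (cases "u \<in> set (take j p)")
    case True
    then obtain i where i: "i < j" "u = p ! i" using p(2) by (auto simp: in_set_conv_nth)
    have "p ! (i + j) \<in> set (drop j p)" using i p(2) by (auto simp: in_set_conv_nth add.commute)
    then have "p ! (i + j) \<in> T - set (take j p)"
      using p(3) set_drop_subset[of j p] set_take_disj_set_drop_if_distinct[OF p(1) order_refl, of j]
      by blast
    then have "c (p ! (i + j)) = c' (p ! (i + j))" by (rule eq)
    moreover have "c u = c (p ! (i + j))" "c' u = c' (p ! (i + j))"
      unfolding i(2) using rep(1)[rule_format, OF i(1)] rep(2)[rule_format, OF i(1)] .
    ultimately show ?thesis by simp
  next
    case False
    show ?thesis
    proof (cases "u \<in> T")
      case True
      then show ?thesis using False eq by blast
    next
      case False
      then show ?thesis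
        by (simp only: extensional_arb[OF ext(1) False] extensional_arb[OF ext(2) False])
    qed
  qed
qed

definition list_colourings :: "('a \<Rightarrow> 'a \<Rightarrow> bool) \<Rightarrow> ('a \<Rightarrow> 'c set) \<Rightarrow> 'a set \<Rightarrow> ('a \<Rightarrow> 'c) set" where
  "list_colourings E L S = {c \<in> PiE S L. nonrepetitive S E c}"

definition extensions :: "'a set \<Rightarrow> ('a \<Rightarrow> 'a \<Rightarrow> bool) \<Rightarrow> ('a \<Rightarrow> 'c set) \<Rightarrow> 'a \<Rightarrow> ('a \<Rightarrow> 'c) set" where
  "extensions S E L v = {c \<in> PiE (insert v S) L. nonrepetitive S E c}"

definition repetitive_extensions ::
    "'a set \<Rightarrow> ('a \<Rightarrow> 'a \<Rightarrow> bool) \<Rightarrow> ('a \<Rightarrow> 'c set) \<Rightarrow> 'a \<Rightarrow> nat \<Rightarrow> 'a list \<Rightarrow> ('a \<Rightarrow> 'c) set" where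
  "repetitive_extensions S E L v j p = {c \<in> extensions S E L v. \<forall>i<j. c (p ! i) = c (p ! (i + j))}"

definition paths_through :: "'a set \<Rightarrow> ('a \<Rightarrow> 'a \<Rightarrow> bool) \<Rightarrow> 'a \<Rightarrow> nat \<Rightarrow> nat \<Rightarrow> 'a list set" where
  "paths_through S E v n m = {p. is_path S E p \<and> length p = n \<and> p ! m = v}"

lemma list_colourings_empty: "list_colourings E L {} = {\<lambda>_. undefined}"
  unfolding list_colourings_def nonrepetitive_def has_repetition_def is_path_def by auto

lemma list_colourings_insert_subset_extensions:
  "list_colourings E L (insert v S) \<subseteq> extensions S E L v"
  unfolding list_colourings_def extensions_def using nonrepetitive_mono[of "insert v S" E _ S] by auto

lemma extensions_diff_list_colourings_subset:
  assumes "finite S" and "\<And>u w. E u w \<Longrightarrow> E w u"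
  shows "extensions S E L v - list_colourings E L (insert v S) \<subseteq>
    (\<Union>i<card (insert v S). \<Union>m<Suc i. \<Union>p\<in>paths_through (insert v S) E v (2 * Suc i) m.
      repetitive_extensions S E L v (Suc i) p)"
proof
  fix c assume c: "c \<in> extensions S E L v - list_colourings E L (insert v S)"
  then have "nonrepetitive S E c" "\<not> nonrepetitive (insert v S) E c"
    by (auto simp: extensions_def list_colourings_def)
  then obtain j m p where "1 \<le> j" "2 * j \<le> card (insert v S)" "m < j" "is_path (insert v S) E p"
      "length p = 2 * j" "p ! m = v" "\<forall>i<j. c (p ! i) = c (p ! (i + j))"
    by (rule repetition_through_new_vertex[where E = E, OF _ _ assms])
  moreover obtain i where "j = Suc i" using \<open>1 \<le> j\<close> by (cases j) auto
  ultimately have "i < card (insert v S)" "m < Suc i"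
      "p \<in> paths_through (insert v S) E v (2 * Suc i) m" "c \<in> repetitive_extensions S E L v (Suc i) p"
    using c by (auto simp: paths_through_def repetitive_extensions_def)
  then show "c \<in> (\<Union>i<card (insert v S). \<Union>m<Suc i. \<Union>p\<in>paths_through (insert v S) E v (2 * Suc i) m.
      repetitive_extensions S E L v (Suc i) p)" by blast
qed

locale nonrep_counting =
  fixes V :: "'a set" and E :: "'a \<Rightarrow> 'a \<Rightarrow> bool" and L :: "'a \<Rightarrow> 'c set"
    and k :: nat and \<Delta> :: nat and \<beta> :: real
  assumes graph: "simple_graph V E"
    and degree_le: "\<And>w. card {u\<in>V. E w u} \<le> \<Delta>"
    and lists: "\<And>v. v \<in> V \<Longrightarrow> finite (L v) \<and> card (L v) = k"
    and degree_sq_less: "real \<Delta> ^ 2 < \<beta>"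
    and counting_bound: "real \<Delta> / (1 - real \<Delta> ^ 2 / \<beta>) ^ 2 \<le> real k - \<beta>"
begin

lemma beta_pos: "\<beta> > 0"
  using le_less_trans[OF zero_le_power2 degree_sq_less] .

lemma finite_V: "finite V"
  using graph by (simp add: simple_graph_def)

lemma sym_E: "E u w \<Longrightarrow> E w u"
  using graph by (simp add: simple_graph_def)

lemma finite_PiE_lists: "S \<subseteq> V \<Longrightarrow> finite (PiE S L)"
  using finite_V lists by (intro finite_PiE) (auto intro: finite_subset)

lemma finite_list_colourings: "S \<subseteq> V \<Longrightarrow> finite (list_colourings E L S)"
  using finite_PiE_lists by (simp add: list_colourings_def)

lemma finite_extensions: "insert v S \<subseteq> V \<Longrightarrow> finite (extensions S E L v)"
  using finite_PiE_lists by (simp add: extensions_def)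

lemma finite_paths_through: "S \<subseteq> V \<Longrightarrow> finite (paths_through S E v n m)"
  by (rule finite_subset[OF _ finite_walks[OF finite_V, of E n]])
    (auto simp: paths_through_def walks_def is_path_def)

lemma card_paths_through_le:
  assumes "S \<subseteq> V" "m \<le> n"
  shows "card (paths_through S E v (Suc n) m) \<le> \<Delta> ^ n"
proof -
  have "paths_through S E v (Suc n) m \<subseteq> {p \<in> walks V E (Suc n). p ! m = v}"
    using assms(1) unfolding paths_through_def walks_def is_path_def by auto
  then have "card (paths_through S E v (Suc n) m) \<le> card {p \<in> walks V E (Suc n). p ! m = v}"
    by (intro card_mono) (simp_all add: finite_walks finite_V)
  also have "\<dots> \<le> \<Delta> ^ n"
    by (rule card_walks_through_le[OF finite_V degree_le]) (use sym_E assms(2) in auto)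
  finally show ?thesis .
qed

lemma card_extensions:
  assumes "v \<in> V" "v \<notin> S"
  shows "card (extensions S E L v) = k * card (list_colourings E L S)"
proof -
  have "extensions S E L v = (\<lambda>(y, g). g(v := y)) ` (L v \<times> list_colourings E L S)"
  proof (intro equalityI subsetI)
    fix c assume c: "c \<in> extensions S E L v"
    have "c(v := undefined) \<in> PiE S L"
      using c assms by (auto simp: extensions_def PiE_def extensional_def Pi_def)
    moreover have "nonrepetitive S E (c(v := undefined))"
      using c assms by (subst nonrepetitive_cong[of S _ c]) (auto simp: extensions_def)
    moreover have "c v \<in> L v" using c by (auto simp: extensions_def PiE_def Pi_def)
    ultimately show "c \<in> (\<lambda>(y, g). g(v := y)) ` (L v \<times> list_colourings E L S)"
      unfolding list_colourings_def by (intro image_eqI[of _ _ "(c v, c(v := undefined))"]) auto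
  next
    fix c assume "c \<in> (\<lambda>(y, g). g(v := y)) ` (L v \<times> list_colourings E L S)"
    then obtain y g where c: "c = g(v := y)" "y \<in> L v" "g \<in> PiE S L" "nonrepetitive S E g"
      unfolding list_colourings_def by auto
    have "c \<in> PiE (insert v S) L" using c by (auto simp: PiE_def extensional_def Pi_def)
    moreover have "nonrepetitive S E c" using c assms by (subst nonrepetitive_cong[of S _ g]) auto
    ultimately show "c \<in> extensions S E L v" by (simp add: extensions_def)
  qed
  moreover have "inj_on (\<lambda>(y, g). g(v := y)) (L v \<times> list_colourings E L S)"
    by (rule inj_on_subset[OF inj_combinator[OF assms(2)]]) (auto simp: list_colourings_def)
  ultimately have "card (extensions S E L v) = card (L v \<times> list_colourings E L S)"
    by (simp add: card_image)
  also have "\<dots> = k * card (list_colourings E L S)"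
    using lists[OF assms(1)] by (simp add: card_cartesian_product)
  finally show ?thesis .
qed

lemma card_repetitive_extensions_le:
  assumes S: "S \<subseteq> V" and v: "v \<in> V" "v \<notin> S"
    and p: "p \<in> paths_through (insert v S) E v (2 * j) m" and "m < j"
    and chain: "\<And>X. X \<subseteq> S \<Longrightarrow>
      \<beta> ^ card X * card (list_colourings E L (S - X)) \<le> card (list_colourings E L S)"
  shows "real (card (repetitive_extensions S E L v j p)) \<le> card (list_colourings E L S) / \<beta> ^ (j - 1)"
proof -
  let ?B = "repetitive_extensions S E L v j p"
  define H where "H = set (take j p)"
  define R where "R = S - H"
  have dist: "distinct p" and setp: "set p \<subseteq> insert v S" and len: "length p = 2 * j"
    using p by (auto simp: paths_through_def is_path_def)
  have "v \<in> H" using p \<open>m < j\<close> nth_mem[of m "take j p"] by (simp add: H_def paths_through_def)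
  then have TR: "insert v S - H = R" by (auto simp: R_def)
  have "inj_on (\<lambda>c. restrict c R) ?B"
  proof (rule inj_onI)
    fix c c' assume c: "c \<in> ?B" and c': "c' \<in> ?B" and eq: "restrict c R = restrict c' R"
    show "c = c'"
    proof (rule repetitive_colourings_eq[OF dist len setp])
      show "c \<in> extensional (insert v S)" "c' \<in> extensional (insert v S)"
        using c c' by (auto simp: repetitive_extensions_def extensions_def PiE_def)
      show "\<forall>i<j. c (p ! i) = c (p ! (i + j))" "\<forall>i<j. c' (p ! i) = c' (p ! (i + j))"
        using c c' by (auto simp: repetitive_extensions_def)
      show "c u = c' u" if "u \<in> insert v S - set (take j p)" for u
        using that eq TR unfolding H_def by (metis restrict_apply')
    qed
  qed
  moreover have "(\<lambda>c. restrict c R) ` ?B \<subseteq> list_colourings E L R"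
  proof
    fix d assume "d \<in> (\<lambda>c. restrict c R) ` ?B"
    then obtain c where c: "c \<in> extensions S E L v" and d: "d = restrict c R"
      by (auto simp: repetitive_extensions_def)
    have "d \<in> PiE R L" using c unfolding d R_def by (auto simp: extensions_def PiE_def Pi_def)
    moreover have "nonrepetitive R E d"
      using nonrepetitive_mono[of S E c R] c unfolding d R_def
      by (subst nonrepetitive_cong[of _ _ c]) (auto simp: extensions_def)
    ultimately show "d \<in> list_colourings E L R" by (simp add: list_colourings_def)
  qed
  ultimately have card_B: "card ?B \<le> card (list_colourings E L R)"
    using finite_list_colourings[of R] S by (intro card_inj_on_le) (auto simp: R_def)
  have "\<beta> ^ (j - 1) * card (list_colourings E L R) \<le> card (list_colourings E L S)"
  proof -
    have "card H = j" using dist len by (simp add: H_def distinct_card)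
    moreover have "H = insert v (S \<inter> H)" using \<open>v \<in> H\<close> setp by (auto simp: H_def dest: in_set_takeD)
    moreover have "finite (S \<inter> H)" by (simp add: H_def)
    ultimately have "card (S \<inter> H) = j - 1" using v(2) by (metis card_insert_disjoint IntD1 diff_Suc_1)
    moreover have "S - S \<inter> H = R" by (auto simp: R_def)
    ultimately show ?thesis using chain[of "S \<inter> H"] by simp
  qed
  then have "real (card (list_colourings E L R)) \<le> card (list_colourings E L S) / \<beta> ^ (j - 1)"
    using beta_pos by (simp add: field_simps)
  then show ?thesis using card_B by linarith
qed

lemma card_bad_extensions_le:
  assumes S: "S \<subseteq> V" and v: "v \<in> V" "v \<notin> S"
    and chain: "\<And>X. X \<subseteq> S \<Longrightarrow>
      \<beta> ^ card X * card (list_colourings E L (S - X)) \<le> card (list_colourings E L S)"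
  shows "real (card (extensions S E L v - list_colourings E L (insert v S)))
    \<le> card (list_colourings E L S) * real \<Delta> *
      (\<Sum>i<card (insert v S). real (Suc i) * (real \<Delta> ^ 2 / \<beta>) ^ i)"
proof -
  let ?T = "insert v S"
  let ?C = "real (card (list_colourings E L S))"
  let ?P = "\<lambda>i m. paths_through ?T E v (2 * Suc i) m"
  let ?B = "\<lambda>i p. repetitive_extensions S E L v (Suc i) p"
  have TV: "?T \<subseteq> V" using S v by auto
  have finB: "finite (?B i p)" for i p
    using finite_extensions[OF TV] by (rule finite_subset[rotated]) (auto simp: repetitive_extensions_def)
  have per_length: "(\<Sum>p\<in>?P i m. real (card (?B i p))) \<le> real \<Delta> ^ (2 * i + 1) * (?C / \<beta> ^ i)"
    if "m < Suc i" for i m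
  proof -
    have "(\<Sum>p\<in>?P i m. real (card (?B i p))) \<le> (\<Sum>p\<in>?P i m. ?C / \<beta> ^ i)"
      using card_repetitive_extensions_le[OF S v _ that chain] by (intro sum_mono) simp
    also have "\<dots> = real (card (?P i m)) * (?C / \<beta> ^ i)" by simp
    also have "\<dots> \<le> real \<Delta> ^ (2 * i + 1) * (?C / \<beta> ^ i)"
    proof (rule mult_right_mono)
      have "card (?P i m) \<le> \<Delta> ^ (2 * i + 1)"
        using card_paths_through_le[OF TV, of m "2 * i + 1"] that by simp
      then show "real (card (?P i m)) \<le> real \<Delta> ^ (2 * i + 1)"
        using of_nat_mono by fastforce
    qed (use beta_pos in simp)
    finally show ?thesis .
  qed
  have "card (extensions S E L v - list_colourings E L ?T)
      \<le> card (\<Union>i<card ?T. \<Union>m<Suc i. \<Union>p\<in>?P i m. ?B i p)"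
    using finite_paths_through[OF TV] finB
    by (intro card_mono[OF _ extensions_diff_list_colourings_subset[OF finite_subset[OF S finite_V]]])
      (auto intro: sym_E)
  also have "\<dots> \<le> (\<Sum>i<card ?T. \<Sum>m<Suc i. \<Sum>p\<in>?P i m. card (?B i p))"
    using finite_paths_through[OF TV] by (intro order_trans[OF card_UN_le] sum_mono card_UN_le) auto
  finally have "real (card (extensions S E L v - list_colourings E L ?T))
      \<le> (\<Sum>i<card ?T. \<Sum>m<Suc i. \<Sum>p\<in>?P i m. real (card (?B i p)))"
    using of_nat_mono by fastforce
  also have "\<dots> \<le> (\<Sum>i<card ?T. \<Sum>m<Suc i. real \<Delta> ^ (2 * i + 1) * (?C / \<beta> ^ i))"
    using per_length by (intro sum_mono) simp
  also have "\<dots> = ?C * real \<Delta> * (\<Sum>i<card ?T. real (Suc i) * (real \<Delta> ^ 2 / \<beta>) ^ i)"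
  proof -
    have "real \<Delta> ^ (2 * i + 1) * (?C / \<beta> ^ i) = ?C * real \<Delta> * (real \<Delta> ^ 2 / \<beta>) ^ i" for i
      by (simp add: power_divide power_add power_mult)
    then show ?thesis by (simp add: sum_distrib_left ac_simps)
  qed
  finally show ?thesis .
qed

lemma extension_step:
  assumes S: "S \<subseteq> V" and v: "v \<in> V" "v \<notin> S"
    and chain: "\<And>X. X \<subseteq> S \<Longrightarrow>
      \<beta> ^ card X * card (list_colourings E L (S - X)) \<le> card (list_colourings E L S)"
  shows "\<beta> * card (list_colourings E L S) \<le> card (list_colourings E L (insert v S))"
proof -
  let ?C = "real (card (list_colourings E L S))"
  let ?good = "list_colourings E L (insert v S)"
  define r where "r = real \<Delta> ^ 2 / \<beta>"
  have "real (card (extensions S E L v - ?good))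
      \<le> ?C * real \<Delta> * (\<Sum>i<card (insert v S). real (Suc i) * r ^ i)"
    unfolding r_def by (rule card_bad_extensions_le[OF S v chain])
  also have "\<dots> \<le> ?C * real \<Delta> * (1 / (1 - r)^2)"
    using beta_pos degree_sq_less unfolding r_def
    by (intro mult_left_mono weighted_geometric_partial_sum_le) auto
  also have "\<dots> = ?C * (real \<Delta> / (1 - r)^2)" by simp
  also have "\<dots> \<le> ?C * (real k - \<beta>)"
    using counting_bound unfolding r_def by (intro mult_left_mono) auto
  finally have bad: "real (card (extensions S E L v - ?good)) \<le> ?C * (real k - \<beta>)" .
  have fin: "finite (extensions S E L v)" using S v by (intro finite_extensions) auto
  have "card (extensions S E L v) = card ?good + card (extensions S E L v - ?good)"
    using card_Diff_subset[OF finite_subset[OF _ fin]] card_mono[OF fin]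
      list_colourings_insert_subset_extensions by (metis le_add_diff_inverse)
  then have "real k * ?C = real (card ?good) + real (card (extensions S E L v - ?good))"
    using card_extensions[OF v] by (metis of_nat_add of_nat_mult)
  then show ?thesis using bad by (simp add: algebra_simps)
qed

lemma card_list_colourings_insert_ge:
  "S \<subseteq> V \<Longrightarrow> v \<in> V \<Longrightarrow> v \<notin> S \<Longrightarrow>
    \<beta> * card (list_colourings E L S) \<le> card (list_colourings E L (insert v S))"
proof (induction "card S" arbitrary: S v rule: less_induct)
  case less
  have "\<beta> ^ card X * card (list_colourings E L (S - X)) \<le> card (list_colourings E L S)"
    if "X \<subseteq> S" for X
  proof -
    have finS: "finite S" using less.prems(1) finite_V by (rule finite_subset)
    have "finite X" using that finS by (rule finite_subset)
    then show ?thesis using that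
    proof (induction X rule: finite_induct)
      case empty
      then show ?case by simp
    next
      case (insert x X)
      have "x \<in> S" using insert.prems by simp
      then have S_X: "S - X = insert x (S - insert x X)" using insert.hyps(2) by auto
      have "card (S - insert x X) < card S"
        using \<open>x \<in> S\<close> finS by (intro psubset_card_mono) auto
      then have "\<beta> * card (list_colourings E L (S - insert x X))
          \<le> card (list_colourings E L (insert x (S - insert x X)))"
        by (rule less.hyps) (use less.prems(1) \<open>x \<in> S\<close> in auto)
      then have step: "\<beta> * card (list_colourings E L (S - insert x X))
          \<le> card (list_colourings E L (S - X))"
        unfolding S_X .
      have "\<beta> ^ card (insert x X) * card (list_colourings E L (S - insert x X))
          = \<beta> ^ card X * (\<beta> * card (list_colourings E L (S - insert x X)))"
        using insert.hyps by simp
      also have "\<dots> \<le> \<beta> ^ card X * card (list_colourings E L (S - X))"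
        using step beta_pos by (intro mult_left_mono) simp_all
      also have "\<dots> \<le> card (list_colourings E L S)"
        using insert.IH insert.prems by simp
      finally show ?case .
    qed
  qed
  then show ?case using extension_step less.prems by blast
qed

lemma card_list_colourings_ge: "S \<subseteq> V \<Longrightarrow> \<beta> ^ card S \<le> card (list_colourings E L S)"
proof (induction S rule: infinite_finite_induct)
  case (infinite S)
  then show ?case using finite_V finite_subset by blast
next
  case empty
  then show ?case by (simp add: list_colourings_empty)
next
  case (insert x S)
  have "\<beta> ^ card (insert x S) = \<beta> * \<beta> ^ card S" using insert by simp
  also have "\<dots> \<le> \<beta> * card (list_colourings E L S)" using insert beta_pos by simp
  also have "\<dots> \<le> card (list_colourings E L (insert x S))"
    using card_list_colourings_insert_ge insert by simp
  finally show ?case .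
qed

lemma exists_nonrepetitive_list_colouring: "\<exists>c. (\<forall>v\<in>V. c v \<in> L v) \<and> nonrepetitive V E c"
proof -
  have "0 < \<beta> ^ card V" using beta_pos by simp
  also have "\<dots> \<le> card (list_colourings E L V)" by (rule card_list_colourings_ge) simp
  finally obtain c where "c \<in> list_colourings E L V" by fastforce
  then show ?thesis by (auto simp: list_colourings_def)
qed

end

lemma obtain_finite_subset_with_card:
  assumes "infinite A \<or> k \<le> card A"
  obtains B where "B \<subseteq> A" "finite B" "card B = k"
proof (cases "finite A")
  case True
  then show ?thesis using assms that by (auto elim: obtain_subset_with_card_n)
next
  case False
  then show ?thesis using infinite_arbitrarily_large that by blast
qed

lemma card_neighbours_le_max_degree:
  assumes "simple_graph V E"
  shows "card {u\<in>V. E w u} \<le> max_degree V E"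
proof (cases "w \<in> V")
  case True
  then show ?thesis using assms
    by (auto simp: simple_graph_def max_degree_def degree_def intro: Max_ge)
next
  case False
  then have "{u\<in>V. E w u} = {}" using assms by (auto simp: simple_graph_def)
  then show ?thesis by (simp only: card.empty zero_le)
qed

lemma nonrep_choosable_if_counting_bound:
  assumes "simple_graph V E" and "\<And>w. card {u\<in>V. E w u} \<le> \<Delta>"
    and "real \<Delta> ^ 2 < \<beta>" and "real \<Delta> / (1 - real \<Delta> ^ 2 / \<beta>) ^ 2 \<le> real k - \<beta>"
  shows "nonrep_choosable V E k"
  unfolding nonrep_choosable_def
proof (intro allI impI)
  fix L :: "'a \<Rightarrow> nat set" assume L: "\<forall>v\<in>V. infinite (L v) \<or> k \<le> card (L v)"
  have "\<forall>v\<in>V. \<exists>B. B \<subseteq> L v \<and> finite B \<and> card B = k"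
  proof
    fix v assume "v \<in> V"
    with L have "infinite (L v) \<or> k \<le> card (L v)" ..
    then obtain B where "B \<subseteq> L v" "finite B" "card B = k"
      by (rule obtain_finite_subset_with_card)
    then show "\<exists>B. B \<subseteq> L v \<and> finite B \<and> card B = k" by blast
  qed
  then have "\<exists>L'. \<forall>v\<in>V. L' v \<subseteq> L v \<and> finite (L' v) \<and> card (L' v) = k"
    by (rule bchoice)
  then obtain L' where L': "\<forall>v\<in>V. L' v \<subseteq> L v \<and> finite (L' v) \<and> card (L' v) = k" ..
  interpret nonrep_counting V E L' k \<Delta> \<beta>
    using assms L' by unfold_locales auto
  show "\<exists>c. (\<forall>v\<in>V. c v \<in> L v) \<and> nonrepetitive V E c"
    using exists_nonrepetitive_list_colouring L' by blast
qed

theorem theorem5: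
  fixes V :: "'a set" and E :: "'a \<Rightarrow> 'a \<Rightarrow> bool"
  assumes "simple_graph V E"
    and "max_degree V E \<ge> 3"
  shows "int (nonrep_choice_number V E) \<le>
    (let D = real (max_degree V E) in
      \<lceil>D ^ 2 + 3 / (2 powr (2/3)) * D powr (5/3)
        + (2 powr (2/3) * D powr (5/3)) / (D powr (1/3) - 2 powr (1/3))\<rceil>)"
proof -
  define D where "D = real (max_degree V E)"
  define \<beta> where "\<beta> = D^2 + 2 powr (1/3) * D powr (5/3)"
  define F where "F = D ^ 2 + 3 / (2 powr (2/3)) * D powr (5/3)
        + (2 powr (2/3) * D powr (5/3)) / (D powr (1/3) - 2 powr (1/3))"
  have "D \<ge> 3" using assms(2) by (simp add: D_def)
  note estimate = choice_bound_estimate[OF this, folded \<beta>_def F_def]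
  have "0 \<le> D / (1 - D^2 / \<beta>)^2" using \<open>D \<ge> 3\<close> by simp
  moreover have "0 < \<beta>" using le_less_trans[OF zero_le_power2 estimate(1)] .
  ultimately have F: "\<beta> + D / (1 - D^2 / \<beta>)^2 \<le> real (nat \<lceil>F\<rceil>)" "0 \<le> F"
    using estimate(2) of_nat_ceiling[of F] by linarith+
  have "nonrep_choosable V E (nat \<lceil>F\<rceil>)"
    using estimate(1) F(1) unfolding D_def
    by (intro nonrep_choosable_if_counting_bound[OF assms(1) card_neighbours_le_max_degree[OF assms(1)]])
      auto
  then have "nonrep_choice_number V E \<le> nat \<lceil>F\<rceil>"
    unfolding nonrep_choice_number_def by (rule Least_le)
  then show ?thesis using F(2) unfolding Let_def D_def[symmetric] F_def[symmetric] by linarith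
qed

end
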